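(* Let $\{r_i\}_{i=1}^\infty$ be symmetric independent real random variables with $\|r_i\|_\infty=1$ for all $i$. Let $X$ be a real Banach space and $n\ge2$. The following are equivalent: (1) $\ell_\infty^n$ is not representable in $X$. (2) There exists $\rho>0$ such that whenever $x_1,\ldots,x_n$ are unit vectors in $X$, there exist signs $\epsilon_1,\ldots,\epsilon_n\in\{\pm1\}$ with $\|\epsilon_1x_1+\cdots+\epsilon_nx_n\|\ge1+\rho$. (3) There exist a strictly convex increasing function $\varphi$ on $[0,\infty)$ with $\varphi(0)=0$ and $\rho>0$ such that whenever $x_1,\ldots,x_n$ are unit vectors in $X$, $\mathbb{E}[\varphi(\|x_1+r_2x_2+\cdots+r_nx_n\|)]\ge\varphi(1)+\rho$. (4) For each strictly convex increasing function $\varphi$ on $[0,\infty)$ with $\varphi(0)=0$ there is $\rho>0$ such that whenever $x_1,\ldots,x_n$ are unit vectors in $X$, $\mathbb{E}[\varphi(\|x_1+r_2x_2+\cdots+r_nx_n\|)]\ge\varphi(1)+\rho$.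
   Context: $\ell_\infty^n$ is $\mathbb{R}^n$ with the maximum norm. A Banach space $Y$ is representable in $X$ if for each $\lambda>1$ there is a bounded linear map $T:Y\to X$ with $\|y\|\le\|Ty\|\le\lambda\|y\|$ for all $y\in Y$. A convex function $\varphi$ on $[0,\infty)$ is strictly convex if $\varphi(\frac{s+t}{2})<\frac{\varphi(s)+\varphi(t)}{2}$ for all distinct $s,t\ge 0$. A random variable $r$ is symmetric if $r$ and $-r$ have the same distribution; $\|r\|_\infty$ is its essential supremum norm. *)

theory Defs
  imports "HOL-Analysis.Analysis" "HOL-Probability.Probability"
begin

definition linf_norm :: "nat \<Rightarrow> (nat \<Rightarrow> real) \<Rightarrow> real" where
  "linf_norm n y = Max ((\<lambda>i. \<bar>y i\<bar>) ` {1..n})"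

text \<open>Carrier of ell_infinity^n: real functions supported on {1..n}.\<close>
definition linf_space :: "nat \<Rightarrow> (nat \<Rightarrow> real) set" where
  "linf_space n = {y. \<forall>i. i \<notin> {1..n} \<longrightarrow> y i = 0}"

definition linf_representable :: "nat \<Rightarrow> 'a::real_normed_vector itself \<Rightarrow> bool" where
  "linf_representable n X \<longleftrightarrow>
     (\<forall>lam>1. \<exists>T :: (nat \<Rightarrow> real) \<Rightarrow> 'a.
        (\<forall>y\<in>linf_space n. \<forall>z\<in>linf_space n. T (\<lambda>i. y i + z i) = T y + T z) \<and>
        (\<forall>y\<in>linf_space n. \<forall>c. T (\<lambda>i. c * y i) = c *\<^sub>R T y) \<and>
        (\<exists>K. \<forall>y\<in>linf_space n. norm (T y) \<le> K * linf_norm n y) \<and>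
        (\<forall>y\<in>linf_space n. linf_norm n y \<le> norm (T y) \<and> norm (T y) \<le> lam * linf_norm n y))"

definition admissible_phi :: "(real \<Rightarrow> real) \<Rightarrow> bool" where
  "admissible_phi \<phi> \<longleftrightarrow>
     convex_on {0..} \<phi> \<and>
     (\<forall>s\<ge>0. \<forall>t\<ge>0. s \<noteq> t \<longrightarrow> \<phi> ((s + t) / 2) < (\<phi> s + \<phi> t) / 2) \<and>
     mono_on {0..} \<phi> \<and> \<phi> 0 = 0"

end

theory Submission
  imports Defs
begin

text \<open>If all sign sums \<open>\<Sum> \<epsilon>\<^sub>i x\<^sub>i\<close> of unit vectors have norm at most \<open>1 + \<rho>\<close>, then
  \<open>y \<mapsto> \<Sum> y\<^sub>i x\<^sub>i\<close> is almost an isometric embedding of \<open>\<ell>\<^sub>\<infinity>\<^sup>n\<close>: its norm, a convex function of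
  \<open>y\<close>, is largest at a vertex of the cube, and flipping the signs of all but a largest coordinate
  bounds it from below. Conversely an almost isometric copy of \<open>\<ell>\<^sub>\<infinity>\<^sup>n\<close> provides such vectors;
  this is (1) \<longleftrightarrow> (2).

  If all sign sums are shorter than \<open>1 + d\<close>, so is \<open>x\<^sub>1 + \<Sum> r\<^sub>i x\<^sub>i\<close> almost surely, and
  continuity of \<open>\<phi>\<close> at 1 gives (3) \<longrightarrow> (2). If some sign sum has norm at least \<open>1 + \<rho>\<close>, then
  with probability bounded below (by independence, symmetry and \<open>\<parallel>r\<^sub>i\<parallel>\<^sub>\<infinity> = 1\<close>) the random signs
  are close to it. Pairing the random sum with its reflection, which has the same law, and using
  \<open>\<parallel>u + v\<parallel> + \<parallel>u - v\<parallel> \<ge> 2\<close> and the strict convexity of \<open>\<phi>\<close> gives (2) \<longrightarrow> (4). The function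
  \<open>\<phi> t = t\<^sup>2\<close> gives (4) \<longrightarrow> (3).\<close>

section \<open>Sign sums and copies of \<open>\<ell>\<^sub>\<infinity>\<^sup>n\<close>\<close>

definition signs_on :: "'i set \<Rightarrow> ('i \<Rightarrow> real) \<Rightarrow> bool" where
  "signs_on S \<epsilon> \<longleftrightarrow> (\<forall>i\<in>S. \<epsilon> i = 1 \<or> \<epsilon> i = -1)"

lemma signs_on_upd: "signs_on S \<epsilon> \<Longrightarrow> c = 1 \<or> c = -1 \<Longrightarrow> signs_on (insert j S) (\<epsilon>(j := c))"
  by (auto simp: signs_on_def)

text \<open>The norm is convex in \<open>t\<close>: the coordinate \<open>t j\<close> is the convex combination of \<open>\<plusminus>1\<close>
  with weights \<open>(1 \<plusminus> t j) / 2\<close>.\<close>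
lemma norm_add_sum_le_of_signs_on:
  fixes x :: "'i \<Rightarrow> 'a::real_normed_vector"
  assumes "finite S"
    and "\<And>\<epsilon>. signs_on S \<epsilon> \<Longrightarrow> norm (a + (\<Sum>i\<in>S. \<epsilon> i *\<^sub>R x i)) \<le> B"
    and "\<forall>i\<in>S. \<bar>t i\<bar> \<le> 1"
  shows "norm (a + (\<Sum>i\<in>S. t i *\<^sub>R x i)) \<le> B"
  using assms
proof (induction S arbitrary: a rule: finite_induct)
  case empty
  then show ?case by (simp add: signs_on_def)
next
  case (insert j S)
  have vertex: "norm ((a + c *\<^sub>R x j) + (\<Sum>i\<in>S. t i *\<^sub>R x i)) \<le> B" if c: "c = 1 \<or> c = -1" for c
  proof (rule insert.IH)
    fix \<epsilon> assume "signs_on S \<epsilon>"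
    then have "norm (a + (\<Sum>i\<in>insert j S. (\<epsilon>(j := c)) i *\<^sub>R x i)) \<le> B"
      by (intro insert.prems(1) signs_on_upd c)
    moreover have "(\<Sum>i\<in>insert j S. (\<epsilon>(j := c)) i *\<^sub>R x i) = c *\<^sub>R x j + (\<Sum>i\<in>S. \<epsilon> i *\<^sub>R x i)"
      using insert.hyps by (auto intro!: sum.cong)
    ultimately show "norm ((a + c *\<^sub>R x j) + (\<Sum>i\<in>S. \<epsilon> i *\<^sub>R x i)) \<le> B"
      by (simp add: add.assoc)
  qed (use insert.prems in auto)
  define s where "s = (\<Sum>i\<in>S. t i *\<^sub>R x i)"
  define p where "p = (1 + t j) / 2"
  have p: "0 \<le> p" "p \<le> 1" using insert.prems(2) by (auto simp: p_def)
  have "a + (\<Sum>i\<in>insert j S. t i *\<^sub>R x i) = p *\<^sub>R ((a + x j) + s) + (1 - p) *\<^sub>R ((a - x j) + s)"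
  proof -
    have "p *\<^sub>R ((a + x j) + s) + (1 - p) *\<^sub>R ((a - x j) + s)
        = (p + (1 - p)) *\<^sub>R (a + s) + (p - (1 - p)) *\<^sub>R x j"
      by (simp add: algebra_simps) (simp flip: scaleR_add_left)
    also have "\<dots> = a + s + t j *\<^sub>R x j" by (simp add: p_def)
    finally show ?thesis using insert.hyps by (simp add: s_def)
  qed
  also have "norm \<dots> \<le> p * norm ((a + x j) + s) + (1 - p) * norm ((a - x j) + s)"
    using p by (intro order_trans[OF norm_triangle_ineq]) simp
  also have "\<dots> \<le> p * B + (1 - p) * B"
    using p vertex[of 1] vertex[of "-1"] unfolding s_def
    by (intro add_mono mult_left_mono) auto
  finally show ?case by (simp add: algebra_simps)
qed

lemma abs_le_linf_norm: "i \<in> {1..n} \<Longrightarrow> \<bar>y i\<bar> \<le> linf_norm n y"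
  unfolding linf_norm_def by (rule Max_ge) auto

lemma linf_norm_attained: "n \<ge> 1 \<Longrightarrow> \<exists>j\<in>{1..n}. \<bar>y j\<bar> = linf_norm n y"
proof -
  assume "n \<ge> 1"
  then have "Max ((\<lambda>i. \<bar>y i\<bar>) ` {1..n}) \<in> (\<lambda>i. \<bar>y i\<bar>) ` {1..n}"
    by (intro Max_in) auto
  then show ?thesis unfolding linf_norm_def by force
qed

lemma linf_norm_nonneg: "n \<ge> 1 \<Longrightarrow> 0 \<le> linf_norm n y"
  by (metis abs_ge_zero linf_norm_attained)

lemma norm_sum_le_linf_norm:
  fixes x :: "nat \<Rightarrow> 'a::real_normed_vector"
  assumes "n \<ge> 1"
    and signs: "\<And>\<epsilon>. signs_on {1..n} \<epsilon> \<Longrightarrow> norm (\<Sum>i=1..n. \<epsilon> i *\<^sub>R x i) \<le> B"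
  shows "norm (\<Sum>i=1..n. y i *\<^sub>R x i) \<le> B * linf_norm n y"
proof (cases "linf_norm n y = 0")
  case True
  then have "\<And>i. i \<in> {1..n} \<Longrightarrow> y i = 0" using abs_le_linf_norm[of _ n y] by force
  then show ?thesis using True by simp
next
  case False
  define m where "m = linf_norm n y"
  have m: "m > 0" using False linf_norm_nonneg[OF assms(1), of y] by (simp add: m_def)
  have "norm (0 + (\<Sum>i=1..n. (y i / m) *\<^sub>R x i)) \<le> B"
  proof (rule norm_add_sum_le_of_signs_on)
    show "\<forall>i\<in>{1..n}. \<bar>y i / m\<bar> \<le> 1"
      using abs_le_linf_norm[of _ n y] m by (simp add: m_def abs_divide)
  qed (use signs in simp_all)
  moreover have "(\<Sum>i=1..n. y i *\<^sub>R x i) = m *\<^sub>R (\<Sum>i=1..n. (y i / m) *\<^sub>R x i)"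
    using m by (simp add: scaleR_sum_right)
  ultimately show ?thesis using m by (simp add: m_def mult.commute)
qed

text \<open>Flipping every sign except that of a largest coordinate \<open>y j\<close> changes the sum by
  \<open>2 y j x j\<close>, which has norm \<open>2 linf_norm n y\<close>.\<close>
lemma linf_norm_le_norm_sum:
  fixes x :: "nat \<Rightarrow> 'a::real_normed_vector"
  assumes "n \<ge> 1" and unit: "\<forall>i\<in>{1..n}. norm (x i) = 1"
    and signs: "\<And>\<epsilon>. signs_on {1..n} \<epsilon> \<Longrightarrow> norm (\<Sum>i=1..n. \<epsilon> i *\<^sub>R x i) \<le> B"
  shows "(2 - B) * linf_norm n y \<le> norm (\<Sum>i=1..n. y i *\<^sub>R x i)"
proof -
  obtain j where j: "j \<in> {1..n}" "\<bar>y j\<bar> = linf_norm n y"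
    using linf_norm_attained[OF assms(1)] by blast
  define z where "z i = (if i = j then y i else - y i)" for i
  define s where "s = (\<Sum>i=1..n. y i *\<^sub>R x i)"
  have "linf_norm n z = linf_norm n y"
    unfolding linf_norm_def by (intro arg_cong[where f = Max] image_cong) (auto simp: z_def)
  then have z_le: "norm (\<Sum>i=1..n. z i *\<^sub>R x i) \<le> B * linf_norm n y"
    using norm_sum_le_linf_norm[OF assms(1) signs] by metis
  have "(\<Sum>i=1..n. z i *\<^sub>R x i) = (\<Sum>i=1..n. (if i = j then (2 * y i) *\<^sub>R x i else 0) - y i *\<^sub>R x i)"
    by (intro sum.cong) (auto simp: z_def scaleR_diff_left[symmetric])
  also have "\<dots> = (2 * y j) *\<^sub>R x j - s"
    using j(1) by (simp add: sum_subtractf s_def)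
  finally have "(2 * y j) *\<^sub>R x j = s + (\<Sum>i=1..n. z i *\<^sub>R x i)" by simp
  then have "2 * linf_norm n y = norm (s + (\<Sum>i=1..n. z i *\<^sub>R x i))"
    using unit j by (metis abs_mult abs_numeral mult.right_neutral norm_scaleR)
  then have "2 * linf_norm n y \<le> norm s + norm (\<Sum>i=1..n. z i *\<^sub>R x i)"
    using norm_triangle_ineq by metis
  then show ?thesis using z_le by (simp add: s_def algebra_simps)
qed

text \<open>If all sign sums of the unit vectors \<open>x i\<close> have norm at most \<open>1 + \<rho>\<close>, the map
  \<open>y \<mapsto> (\<Sum>i. y i x i) / (1 - \<rho>)\<close> is a \<open>(1 + \<rho>) / (1 - \<rho>)\<close>-embedding of \<open>\<ell>\<^sub>\<infinity>\<^sup>n\<close>.\<close>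
lemma linf_representable_if_sign_sums_near_one:
  assumes n: "n \<ge> 1"
    and near: "\<And>\<rho>. \<rho> > 0 \<Longrightarrow> \<exists>x::nat \<Rightarrow> 'a::real_normed_vector. (\<forall>i\<in>{1..n}. norm (x i) = 1) \<and>
       (\<forall>\<epsilon>. signs_on {1..n} \<epsilon> \<longrightarrow> norm (\<Sum>i=1..n. \<epsilon> i *\<^sub>R x i) \<le> 1 + \<rho>)"
  shows "linf_representable n TYPE('a)"
  unfolding linf_representable_def
proof (intro allI impI)
  fix lam :: real assume lam: "lam > 1"
  define \<rho> where "\<rho> = (lam - 1) / (lam + 1)"
  have \<rho>: "0 < \<rho>" "\<rho> < 1" and lam_eq: "(1 + \<rho>) / (1 - \<rho>) = lam"
    using lam by (auto simp: \<rho>_def field_simps)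
  obtain x :: "nat \<Rightarrow> 'a" where unit: "\<forall>i\<in>{1..n}. norm (x i) = 1"
    and signs: "\<And>\<epsilon>. signs_on {1..n} \<epsilon> \<Longrightarrow> norm (\<Sum>i=1..n. \<epsilon> i *\<^sub>R x i) \<le> 1 + \<rho>"
    using near[OF \<rho>(1)] by blast
  define T where "T y = (1 / (1 - \<rho>)) *\<^sub>R (\<Sum>i=1..n. y i *\<^sub>R x i)" for y
  have upper: "norm (T y) \<le> lam * linf_norm n y" for y
  proof -
    have "norm (T y) = norm (\<Sum>i=1..n. y i *\<^sub>R x i) / (1 - \<rho>)"
      using \<rho> by (simp add: T_def)
    also have "\<dots> \<le> ((1 + \<rho>) * linf_norm n y) / (1 - \<rho>)"
      using norm_sum_le_linf_norm[OF n signs] \<rho> by (intro divide_right_mono) auto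
    finally show ?thesis by (simp add: lam_eq[symmetric])
  qed
  have lower: "linf_norm n y \<le> norm (T y)" for y
    using linf_norm_le_norm_sum[OF n unit signs, of y] \<rho> by (simp add: T_def field_simps)
  show "\<exists>T :: (nat \<Rightarrow> real) \<Rightarrow> 'a.
        (\<forall>y\<in>linf_space n. \<forall>z\<in>linf_space n. T (\<lambda>i. y i + z i) = T y + T z) \<and>
        (\<forall>y\<in>linf_space n. \<forall>c. T (\<lambda>i. c * y i) = c *\<^sub>R T y) \<and>
        (\<exists>K. \<forall>y\<in>linf_space n. norm (T y) \<le> K * linf_norm n y) \<and>
        (\<forall>y\<in>linf_space n. linf_norm n y \<le> norm (T y) \<and> norm (T y) \<le> lam * linf_norm n y)"
    using upper lower
    by (intro exI[of _ T] conjI)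
       (auto simp: T_def scaleR_add_left sum.distrib scaleR_add_right scaleR_sum_right)
qed

lemma linf_space_sum:
  "(\<And>i. i \<in> S \<Longrightarrow> f i \<in> linf_space n) \<Longrightarrow> (\<lambda>k. \<Sum>i\<in>S. f i k) \<in> linf_space n"
  by (simp add: linf_space_def)

lemma additive_on_linf_space_sum:
  fixes T :: "(nat \<Rightarrow> real) \<Rightarrow> 'a::real_vector"
  assumes add: "\<forall>y\<in>linf_space n. \<forall>z\<in>linf_space n. T (\<lambda>i. y i + z i) = T y + T z"
    and hom: "\<forall>y\<in>linf_space n. \<forall>c. T (\<lambda>i. c * y i) = c *\<^sub>R T y"
    and "finite S" and f: "\<And>i. i \<in> S \<Longrightarrow> f i \<in> linf_space n"
  shows "T (\<lambda>k. \<Sum>i\<in>S. f i k) = (\<Sum>i\<in>S. T (f i))"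
  using \<open>finite S\<close> f
proof (induction S rule: finite_induct)
  case empty
  have "(\<lambda>k. 0) \<in> linf_space n" by (simp add: linf_space_def)
  then have "T (\<lambda>k. 0) = 0 *\<^sub>R T (\<lambda>k. 0)"
    using hom[rule_format, of "\<lambda>k. 0" 0] by (simp only: mult_zero_left)
  then show ?case by simp
next
  case (insert j S)
  have "T (\<lambda>k. \<Sum>i\<in>insert j S. f i k) = T (\<lambda>k. f j k + (\<Sum>i\<in>S. f i k))"
    using insert.hyps by simp
  also have "\<dots> = T (f j) + T (\<lambda>k. \<Sum>i\<in>S. f i k)"
    using add insert.prems linf_space_sum[of S f n] by simp
  finally show ?case using insert by simp
qed

definition linf_unit :: "nat \<Rightarrow> nat \<Rightarrow> real" where
  "linf_unit i = (\<lambda>k. if k = i then 1 else 0)"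

lemma linf_unit_in_linf_space: "i \<in> {1..n} \<Longrightarrow> linf_unit i \<in> linf_space n"
  by (auto simp: linf_unit_def linf_space_def)

lemma linf_norm_linf_unit: "i \<in> {1..n} \<Longrightarrow> linf_norm n (linf_unit i) = 1"
  unfolding linf_norm_def by (intro Max_eqI) (auto simp: linf_unit_def)

lemma sum_linf_unit_apply: "k \<in> S \<Longrightarrow> finite S \<Longrightarrow> (\<Sum>i\<in>S. a i * linf_unit i k) = a k"
  by (simp add: linf_unit_def if_distrib[of "\<lambda>t. a _ * t"] sum.delta cong: if_cong)

text \<open>Conversely the normalised images \<open>T e\<^sub>i / \<parallel>T e\<^sub>i\<parallel>\<close> of the unit vectors of an embedding
  \<open>T\<close> have all sign sums of norm at most \<open>\<lambda>\<close>, because \<open>\<parallel>T e\<^sub>i\<parallel> \<ge> 1\<close>.\<close>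
lemma sign_sums_near_one_if_linf_representable:
  assumes n: "n \<ge> 1" and repr: "linf_representable n TYPE('a)" and "\<rho> > 0"
  obtains x :: "nat \<Rightarrow> 'a::real_normed_vector" where "\<forall>i\<in>{1..n}. norm (x i) = 1"
    and "\<And>\<epsilon>. signs_on {1..n} \<epsilon> \<Longrightarrow> norm (\<Sum>i=1..n. \<epsilon> i *\<^sub>R x i) < 1 + \<rho>"
proof -
  define lam where "lam = 1 + \<rho> / 2"
  have "lam > 1" using \<open>\<rho> > 0\<close> by (simp add: lam_def)
  then obtain T :: "(nat \<Rightarrow> real) \<Rightarrow> 'a" where
    add: "\<forall>y\<in>linf_space n. \<forall>z\<in>linf_space n. T (\<lambda>i. y i + z i) = T y + T z" and
    hom: "\<forall>y\<in>linf_space n. \<forall>c. T (\<lambda>i. c * y i) = c *\<^sub>R T y" and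
    bounds: "\<forall>y\<in>linf_space n. linf_norm n y \<le> norm (T y) \<and> norm (T y) \<le> lam * linf_norm n y"
    using repr unfolding linf_representable_def by blast
  define N where "N i = norm (T (linf_unit i))" for i
  have N: "N i \<ge> 1" if "i \<in> {1..n}" for i
    using bounds linf_unit_in_linf_space[OF that] linf_norm_linf_unit[OF that] by (force simp: N_def)
  define x where "x i = (1 / N i) *\<^sub>R T (linf_unit i)" for i
  show ?thesis
  proof
    show "\<forall>i\<in>{1..n}. norm (x i) = 1"
      using N by (fastforce simp: x_def N_def)
  next
    fix \<epsilon> :: "nat \<Rightarrow> real" assume \<epsilon>: "signs_on {1..n} \<epsilon>"
    define f where "f i = (\<lambda>k. (\<epsilon> i / N i) * linf_unit i k)" for i
    define y where "y = (\<lambda>k. \<Sum>i\<in>{1..n}. f i k)"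
    have f_space: "f i \<in> linf_space n" if "i \<in> {1..n}" for i
      using linf_unit_in_linf_space[OF that] by (auto simp: f_def linf_space_def)
    have "T y = (\<Sum>i=1..n. T (f i))"
      unfolding y_def by (rule additive_on_linf_space_sum[OF add hom _ f_space]) auto
    also have "\<dots> = (\<Sum>i=1..n. \<epsilon> i *\<^sub>R x i)"
    proof (rule sum.cong)
      fix i assume "i \<in> {1..n}"
      then show "T (f i) = \<epsilon> i *\<^sub>R x i"
        using hom[rule_format, OF linf_unit_in_linf_space, of i "\<epsilon> i / N i"]
        unfolding f_def x_def by simp
    qed simp
    finally have Ty: "T y = (\<Sum>i=1..n. \<epsilon> i *\<^sub>R x i)" .
    have "\<bar>y k\<bar> \<le> 1" if k: "k \<in> {1..n}" for k
    proof -
      have "\<epsilon> k = 1 \<or> \<epsilon> k = -1" using \<epsilon> k by (simp add: signs_on_def)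
      moreover have "y k = \<epsilon> k / N k"
        using sum_linf_unit_apply[of k "{1..n}" "\<lambda>i. \<epsilon> i / N i"] k by (simp add: y_def f_def)
      ultimately have "\<bar>y k\<bar> = 1 / N k" by (auto simp: N_def)
      then show ?thesis using N[OF k] by (simp add: divide_le_eq)
    qed
    then have "linf_norm n y \<le> 1"
      unfolding linf_norm_def using n by (intro Max.boundedI) auto
    moreover have "y \<in> linf_space n" unfolding y_def using f_space by (rule linf_space_sum)
    ultimately have "norm (T y) \<le> lam"
      using bounds \<open>lam > 1\<close> by (smt (verit) mult_left_le)
    then show "norm (\<Sum>i=1..n. \<epsilon> i *\<^sub>R x i) < 1 + \<rho>"
      using Ty \<open>\<rho> > 0\<close> by (simp add: lam_def)
  qed
qed

text \<open>Condition (2): the space is uniformly non-\<open>\<ell>\<^sub>\<infinity>\<^sup>n\<close> in the sense of James.\<close>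
definition uniformly_non_linf :: "nat \<Rightarrow> 'a::real_normed_vector itself \<Rightarrow> bool" where
  "uniformly_non_linf n _ \<longleftrightarrow> (\<exists>\<rho>>0. \<forall>x::nat \<Rightarrow> 'a. (\<forall>i\<in>{1..n}. norm (x i) = 1) \<longrightarrow>
     (\<exists>\<epsilon>. signs_on {1..n} \<epsilon> \<and> norm (\<Sum>i=1..n. \<epsilon> i *\<^sub>R x i) \<ge> 1 + \<rho>))"

lemma not_linf_representable_iff_uniformly_non_linf:
  assumes "n \<ge> 1"
  shows "\<not> linf_representable n TYPE('a::real_normed_vector) \<longleftrightarrow> uniformly_non_linf n TYPE('a)"
proof
  assume not_repr: "\<not> linf_representable n TYPE('a)"
  show "uniformly_non_linf n TYPE('a)"
  proof (rule ccontr)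
    assume not_uniform: "\<not> uniformly_non_linf n TYPE('a)"
    have "\<exists>x::nat \<Rightarrow> 'a. (\<forall>i\<in>{1..n}. norm (x i) = 1) \<and>
       (\<forall>\<epsilon>. signs_on {1..n} \<epsilon> \<longrightarrow> norm (\<Sum>i=1..n. \<epsilon> i *\<^sub>R x i) \<le> 1 + \<rho>)" if "\<rho> > 0" for \<rho>
    proof -
      from not_uniform that obtain x :: "nat \<Rightarrow> 'a" where "\<forall>i\<in>{1..n}. norm (x i) = 1"
        and "\<forall>\<epsilon>. signs_on {1..n} \<epsilon> \<longrightarrow> norm (\<Sum>i=1..n. \<epsilon> i *\<^sub>R x i) < 1 + \<rho>"
        unfolding uniformly_non_linf_def not_le[symmetric] by blast
      then show ?thesis by (auto intro: less_imp_le)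
    qed
    with not_repr show False
      using linf_representable_if_sign_sums_near_one[OF assms] by blast
  qed
next
  assume "uniformly_non_linf n TYPE('a)"
  then obtain \<rho> where "\<rho> > 0" and large: "\<And>x::nat \<Rightarrow> 'a. \<forall>i\<in>{1..n}. norm (x i) = 1 \<Longrightarrow>
     \<exists>\<epsilon>. signs_on {1..n} \<epsilon> \<and> norm (\<Sum>i=1..n. \<epsilon> i *\<^sub>R x i) \<ge> 1 + \<rho>"
    unfolding uniformly_non_linf_def by blast
  show "\<not> linf_representable n TYPE('a)"
  proof
    assume "linf_representable n TYPE('a)"
    then obtain x :: "nat \<Rightarrow> 'a" where unit: "\<forall>i\<in>{1..n}. norm (x i) = 1"
      and small: "\<And>\<epsilon>. signs_on {1..n} \<epsilon> \<Longrightarrow> norm (\<Sum>i=1..n. \<epsilon> i *\<^sub>R x i) < 1 + \<rho>"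
      using sign_sums_near_one_if_linf_representable[OF assms _ \<open>\<rho> > 0\<close>] by blast
    from large[OF unit] obtain \<epsilon> where "signs_on {1..n} \<epsilon>" "norm (\<Sum>i=1..n. \<epsilon> i *\<^sub>R x i) \<ge> 1 + \<rho>"
      by blast
    with small show False by fastforce
  qed
qed

lemma sum_atLeast1_atMost_split: "(n::nat) \<ge> 1 \<Longrightarrow> (\<Sum>i=1..n. f i) = f 1 + (\<Sum>i=2..n. f i)"
  using sum.atLeast_Suc_atMost[of 1 n f] by (simp add: numeral_2_eq_2)

lemma signs_on_normalize_first:
  fixes x :: "nat \<Rightarrow> 'a::real_normed_vector"
  assumes "n \<ge> 1" and \<epsilon>: "signs_on {1..n} \<epsilon>"
  obtains \<eta> where "signs_on {2..n} \<eta>"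
    and "norm (x 1 + (\<Sum>i=2..n. \<eta> i *\<^sub>R x i)) = norm (\<Sum>i=1..n. \<epsilon> i *\<^sub>R x i)"
proof
  have \<epsilon>1: "\<epsilon> 1 = 1 \<or> \<epsilon> 1 = -1" using \<epsilon> \<open>n \<ge> 1\<close> by (simp add: signs_on_def)
  show "signs_on {2..n} (\<lambda>i. \<epsilon> 1 * \<epsilon> i)" using \<epsilon> \<epsilon>1 by (auto simp: signs_on_def)
  have "\<epsilon> 1 *\<^sub>R (\<Sum>i=1..n. \<epsilon> i *\<^sub>R x i) = (\<epsilon> 1 * \<epsilon> 1) *\<^sub>R x 1 + (\<Sum>i=2..n. (\<epsilon> 1 * \<epsilon> i) *\<^sub>R x i)"
    unfolding sum_atLeast1_atMost_split[OF \<open>n \<ge> 1\<close>] by (simp add: scaleR_add_right scaleR_sum_right)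
  also have "\<epsilon> 1 * \<epsilon> 1 = 1" using \<epsilon>1 by auto
  finally have "x 1 + (\<Sum>i=2..n. (\<epsilon> 1 * \<epsilon> i) *\<^sub>R x i) = \<epsilon> 1 *\<^sub>R (\<Sum>i=1..n. \<epsilon> i *\<^sub>R x i)"
    by simp
  then show "norm (x 1 + (\<Sum>i=2..n. (\<epsilon> 1 * \<epsilon> i) *\<^sub>R x i)) = norm (\<Sum>i=1..n. \<epsilon> i *\<^sub>R x i)"
    using \<epsilon>1 by auto
qed

lemma signs_on_extend_first:
  fixes x :: "nat \<Rightarrow> 'a::real_normed_vector"
  assumes "n \<ge> 1" and "signs_on {2..n} \<eta>"
  shows "signs_on {1..n} (\<eta>(1 := 1))"
    and "(\<Sum>i=1..n. (\<eta>(1 := 1)) i *\<^sub>R x i) = x 1 + (\<Sum>i=2..n. \<eta> i *\<^sub>R x i)"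
proof -
  show "signs_on {1..n} (\<eta>(1 := 1))"
    using assms(2) by (auto simp: signs_on_def)
  have "(\<Sum>i=2..n. (\<eta>(1 := 1)) i *\<^sub>R x i) = (\<Sum>i=2..n. \<eta> i *\<^sub>R x i)"
    by (intro sum.cong) auto
  then show "(\<Sum>i=1..n. (\<eta>(1 := 1)) i *\<^sub>R x i) = x 1 + (\<Sum>i=2..n. \<eta> i *\<^sub>R x i)"
    unfolding sum_atLeast1_atMost_split[OF assms(1)] by simp
qed

section \<open>Strictly convex increasing functions\<close>

lemma admissible_phi_power2: "admissible_phi (\<lambda>t. t\<^sup>2)"
  unfolding admissible_phi_def
proof (intro conjI allI impI)
  show "convex_on {0..} (\<lambda>t::real. t\<^sup>2)"
    by (rule convex_on_subset[OF convex_power2]) auto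
  show "mono_on {0..} (\<lambda>t::real. t\<^sup>2)"
    by (auto intro!: mono_onI power_mono)
next
  fix s t :: real assume "s \<noteq> t"
  then have "0 < (s - t)\<^sup>2" by simp
  then show "((s + t) / 2)\<^sup>2 < (s\<^sup>2 + t\<^sup>2) / 2"
    by (simp add: power2_eq_square field_simps)
qed simp

definition convexity_gap :: "(real \<Rightarrow> real) \<Rightarrow> real \<Rightarrow> real" where
  "convexity_gap \<phi> c = (\<phi> (1 + c) + \<phi> (1 - c)) / 2 - \<phi> 1"

context
  fixes \<phi> :: "real \<Rightarrow> real"
  assumes adm: "admissible_phi \<phi>"
begin

lemma admissible_phi_mono: "0 \<le> s \<Longrightarrow> s \<le> t \<Longrightarrow> \<phi> s \<le> \<phi> t"
  using adm unfolding admissible_phi_def by (auto intro: mono_onD)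

lemma admissible_phi_convex: "convex_on {0..} \<phi>"
  using adm unfolding admissible_phi_def by blast

lemma admissible_phi_nonneg: "0 \<le> t \<Longrightarrow> 0 \<le> \<phi> t"
  using admissible_phi_mono[of 0 t] adm unfolding admissible_phi_def by simp

lemma borel_measurable_admissible_phi_max: "(\<lambda>t. \<phi> (max t 0)) \<in> borel_measurable borel"
  by (rule borel_measurable_mono) (auto intro!: monoI admissible_phi_mono)

lemma admissible_phi_right_continuous_at_one:
  assumes "e > 0"
  obtains d where "d > 0" "\<phi> (1 + d) < \<phi> 1 + e"
proof -
  have "convex_on {0<..} \<phi>" by (rule convex_on_subset[OF admissible_phi_convex]) auto
  then have "continuous_on {0<..} \<phi>" by (intro convex_on_continuous) auto
  then have "isCont \<phi> 1" by (simp add: continuous_on_eq_continuous_at)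
  then obtain d where "d > 0" and d: "\<And>y. dist y 1 < d \<Longrightarrow> dist (\<phi> y) (\<phi> 1) < e"
    using \<open>e > 0\<close> unfolding continuous_at_eps_delta by blast
  have "\<bar>\<phi> (1 + d / 2) - \<phi> 1\<bar> < e" using d[of "1 + d / 2"] \<open>d > 0\<close> by (simp add: dist_real_def)
  then show ?thesis using that[of "d / 2"] \<open>d > 0\<close> by simp
qed

lemma convexity_gap_pos: "0 < c \<Longrightarrow> c \<le> 1 \<Longrightarrow> 0 < convexity_gap \<phi> c"
  using adm unfolding admissible_phi_def convexity_gap_def
  by (smt (verit, best) field_sum_of_halves)

lemma admissible_phi_one_le_midpoint:
  assumes "0 \<le> a" "0 \<le> b" "2 \<le> a + b"
  shows "\<phi> 1 \<le> (\<phi> a + \<phi> b) / 2"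
proof -
  have "\<phi> 1 \<le> \<phi> ((1 - 1/2) *\<^sub>R a + (1/2) *\<^sub>R b)"
    using assms by (intro admissible_phi_mono) auto
  also have "\<dots> \<le> (1 - 1/2) * \<phi> a + (1/2) * \<phi> b"
    using assms by (intro convex_onD[OF admissible_phi_convex]) auto
  finally show ?thesis by simp
qed

text \<open>If \<open>b \<ge> 1 - c\<close> this is monotonicity; otherwise \<open>1 \<plusminus> c\<close> are convex combinations of
  \<open>b\<close> and \<open>2 - b \<le> a\<close> with swapped weights.\<close>
lemma admissible_phi_gap_le_midpoint:
  assumes c: "0 < c" "c < 1" and ab: "1 + c \<le> a" "0 \<le> b" "2 \<le> a + b"
  shows "\<phi> 1 + convexity_gap \<phi> c \<le> (\<phi> a + \<phi> b) / 2"
proof (cases "1 - c \<le> b")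
  case True
  then show ?thesis
    using admissible_phi_mono[of "1 + c" a] admissible_phi_mono[of "1 - c" b] c ab
    by (simp add: convexity_gap_def)
next
  case False
  define l where "l = (1 - b + c) / (2 - 2 * b)"
  have b: "b < 1" using False c by simp
  have l: "0 \<le> l" "l \<le> 1" "l * (2 - 2 * b) = 1 - b + c"
    using b c False by (auto simp: l_def field_simps)
  have "\<phi> (1 - c) \<le> (1 - l) * \<phi> (2 - b) + l * \<phi> b"
    using convex_onD[OF admissible_phi_convex, of l "2 - b" b] l b ab
    by (simp add: algebra_simps)
  moreover have "\<phi> (1 + c) \<le> (1 - l) * \<phi> b + l * \<phi> (2 - b)"
    using convex_onD[OF admissible_phi_convex, of l b "2 - b"] l b ab
    by (simp add: algebra_simps)
  moreover have "\<phi> (2 - b) \<le> \<phi> a" using ab b by (intro admissible_phi_mono) auto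
  ultimately show ?thesis by (simp add: convexity_gap_def algebra_simps)
qed

end

section \<open>Measurability and symmetric random variables\<close>

lemma borel_measurable_norm_add_sum:
  fixes x :: "'i::countable \<Rightarrow> 'a::real_normed_vector"
  shows "(\<lambda>y. norm (c + (\<Sum>i\<in>I. y i *\<^sub>R x i))) \<in> borel_measurable (\<Pi>\<^sub>M i\<in>I. borel)"
proof -
  define h where "h z = norm (c + (\<Sum>i\<in>I. z i *\<^sub>R x i))" for z :: "'i \<Rightarrow> real"
  have "continuous_on UNIV h" unfolding h_def
    by (intro continuous_intros continuous_on_product_coordinates)
  then have "h \<in> borel_measurable borel" by (rule borel_measurable_continuous_onI)
  then have h: "h \<in> borel_measurable (\<Pi>\<^sub>M i\<in>UNIV. borel)"
    using measurable_cong_sets[OF sets_PiM_equal_borel refl] by blast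
  have extend: "(\<lambda>y i. if i \<in> I then y i else (0::real)) \<in> (\<Pi>\<^sub>M i\<in>I. borel) \<rightarrow>\<^sub>M (\<Pi>\<^sub>M i\<in>UNIV. borel)"
  proof (rule measurable_PiM_single')
    fix i
    show "(\<lambda>y. if i \<in> I then y i else (0::real)) \<in> borel_measurable (\<Pi>\<^sub>M i\<in>I. borel)"
      by (cases "i \<in> I") auto
  qed auto
  have "(\<lambda>y. norm (c + (\<Sum>i\<in>I. y i *\<^sub>R x i))) = h \<circ> (\<lambda>y i. if i \<in> I then y i else 0)"
    unfolding h_def by (intro ext) (simp cong: sum.cong)
  then show ?thesis using measurable_comp[OF extend h] by simp
qed

context prob_space
begin

lemma AE_abs_le_of_esssup: "esssup M (\<lambda>\<omega>. ereal \<bar>X \<omega>\<bar>) = ereal c \<Longrightarrow> AE \<omega> in M. \<bar>X \<omega>\<bar> \<le> c"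
  using esssup_AE[of "\<lambda>\<omega>. ereal \<bar>X \<omega>\<bar>" M] by simp

lemma prob_ball_symmetric:
  fixes X :: "'a \<Rightarrow> real"
  assumes X: "X \<in> borel_measurable M" and sym: "distr M borel X = distr M borel (\<lambda>\<omega>. - X \<omega>)"
  shows "prob (X -` ball (- s) \<delta> \<inter> space M) = prob (X -` ball s \<delta> \<inter> space M)"
proof -
  have negX: "(\<lambda>\<omega>. - X \<omega>) \<in> borel_measurable M" using X by (rule borel_measurable_uminus)
  have "prob (X -` ball (- s) \<delta> \<inter> space M) = measure (distr M borel X) (ball (- s) \<delta>)"
    using X by (simp add: measure_distr)
  also have "\<dots> = prob ((\<lambda>\<omega>. - X \<omega>) -` ball (- s) \<delta> \<inter> space M)"
    using negX by (simp add: sym measure_distr)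
  also have "(\<lambda>\<omega>. - X \<omega>) -` ball (- s) \<delta> = X -` ball s \<delta>"
    by (auto simp: dist_real_def)
  finally show ?thesis .
qed

text \<open>Since \<open>\<parallel>X\<parallel>\<^sub>\<infinity> = 1\<close>, the event \<open>\<bar>X\<bar> > 1 - \<delta>\<close> has positive probability; up to a null
  set it is covered by the two balls around \<open>\<plusminus>1\<close>, which are equally likely by symmetry.\<close>
lemma prob_ball_sign_pos:
  fixes X :: "'a \<Rightarrow> real"
  assumes X[measurable]: "X \<in> borel_measurable M"
    and sym: "distr M borel X = distr M borel (\<lambda>\<omega>. - X \<omega>)"
    and sup: "esssup M (\<lambda>\<omega>. ereal \<bar>X \<omega>\<bar>) = 1" and "\<delta> > 0" and s: "s = 1 \<or> s = -1"
  shows "prob (X -` ball s \<delta> \<inter> space M) > 0"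
proof -
  define B where "B t = X -` ball t \<delta> \<inter> space M" for t
  define N where "N = {\<omega> \<in> space M. \<bar>X \<omega>\<bar> > 1}"
  have sets: "B t \<in> sets M" "N \<in> sets M" for t unfolding B_def N_def by measurable
  have "emeasure M N = 0"
    using AE_abs_le_of_esssup[of X 1] sup unfolding N_def
    by (intro emeasure_eq_0_AE) (auto elim!: AE_mp)
  then have null: "prob N = 0" by (simp add: emeasure_eq_measure)
  have "emeasure M {\<omega> \<in> space M. ereal \<bar>X \<omega>\<bar> > ereal (1 - \<delta>)} > 0"
    using sup \<open>\<delta> > 0\<close> by (intro esssup_pos_measure) auto
  then have "0 < prob {\<omega> \<in> space M. \<bar>X \<omega>\<bar> > 1 - \<delta>}"
    by (simp add: emeasure_eq_measure)
  also have "\<dots> \<le> prob (B 1 \<union> B (-1) \<union> N)"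
    using sets by (intro finite_measure_mono) (auto simp: B_def N_def dist_real_def)
  also have "\<dots> \<le> prob (B 1 \<union> B (-1)) + prob N"
    using sets by (intro measure_Un_le) auto
  also have "\<dots> \<le> prob (B 1) + prob (B (-1))"
    using sets measure_Un_le[of "B 1" M "B (-1)"] null by simp
  also have "prob (B (-1)) = prob (B 1)"
    unfolding B_def using prob_ball_symmetric[OF X sym] by simp
  finally show ?thesis
    using s prob_ball_symmetric[OF X sym, of 1 \<delta>] unfolding B_def by auto
qed

text \<open>The joint law of independent symmetric variables is a product of symmetric laws, hence
  invariant under negating all of them.\<close>
lemma integral_indep_symmetric_neg:
  fixes X :: "'i \<Rightarrow> 'a \<Rightarrow> real" and g :: "('i \<Rightarrow> real) \<Rightarrow> real"
  assumes "I \<noteq> {}" and X: "\<And>i. i \<in> I \<Longrightarrow> random_variable borel (X i)"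
    and indep: "indep_vars (\<lambda>_. borel) X I"
    and sym: "\<And>i. i \<in> I \<Longrightarrow> distr M borel (X i) = distr M borel (\<lambda>\<omega>. - X i \<omega>)"
    and g: "g \<in> borel_measurable (\<Pi>\<^sub>M i\<in>I. borel)"
  shows "(\<integral>\<omega>. g (\<lambda>i\<in>I. X i \<omega>) \<partial>M) = (\<integral>\<omega>. g (\<lambda>i\<in>I. - X i \<omega>) \<partial>M)"
proof -
  have X': "\<And>i. i \<in> I \<Longrightarrow> random_variable borel (\<lambda>\<omega>. - X i \<omega>)"
    by (intro borel_measurable_uminus X)
  have indep': "indep_vars (\<lambda>_. borel) (\<lambda>i \<omega>. - X i \<omega>) I"
    by (rule indep_vars_compose2[OF indep, where Y = "\<lambda>i. uminus"]) auto
  have "distr M (\<Pi>\<^sub>M i\<in>I. borel) (\<lambda>\<omega>. \<lambda>i\<in>I. X i \<omega>) = (\<Pi>\<^sub>M i\<in>I. distr M borel (X i))"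
    using indep_vars_iff_distr_eq_PiM'[OF \<open>I \<noteq> {}\<close> X] indep by simp
  also have "\<dots> = (\<Pi>\<^sub>M i\<in>I. distr M borel (\<lambda>\<omega>. - X i \<omega>))"
    using sym by (intro PiM_cong) auto
  also have "\<dots> = distr M (\<Pi>\<^sub>M i\<in>I. borel) (\<lambda>\<omega>. \<lambda>i\<in>I. - X i \<omega>)"
    using indep_vars_iff_distr_eq_PiM'[OF \<open>I \<noteq> {}\<close> X'] indep' by simp
  finally have law: "distr M (\<Pi>\<^sub>M i\<in>I. borel) (\<lambda>\<omega>. \<lambda>i\<in>I. X i \<omega>) =
      distr M (\<Pi>\<^sub>M i\<in>I. borel) (\<lambda>\<omega>. \<lambda>i\<in>I. - X i \<omega>)" .
  have "(\<lambda>\<omega>. \<lambda>i\<in>I. X i \<omega>) \<in> M \<rightarrow>\<^sub>M (\<Pi>\<^sub>M i\<in>I. borel)"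
    "(\<lambda>\<omega>. \<lambda>i\<in>I. - X i \<omega>) \<in> M \<rightarrow>\<^sub>M (\<Pi>\<^sub>M i\<in>I. borel)"
    using X X' by (auto intro!: measurable_restrict)
  then show ?thesis
    using integral_distr[OF _ g] law by metis
qed

end

section \<open>Random sign sums\<close>

locale symmetric_bounded_sequence = prob_space M for M :: "'b measure" +
  fixes r :: "nat \<Rightarrow> 'b \<Rightarrow> real" and n :: nat
  assumes measurable_r: "\<And>i. i \<ge> 1 \<Longrightarrow> r i \<in> borel_measurable M"
    and indep_r: "indep_vars (\<lambda>_. borel) r {1..}"
    and symmetric_r: "\<And>i. i \<ge> 1 \<Longrightarrow> distr M borel (r i) = distr M borel (\<lambda>\<omega>. - r i \<omega>)"
    and esssup_r: "\<And>i. i \<ge> 1 \<Longrightarrow> esssup M (\<lambda>\<omega>. ereal \<bar>r i \<omega>\<bar>) = 1"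
    and two_le_n: "n \<ge> 2"
begin

definition expected_norm :: "(real \<Rightarrow> real) \<Rightarrow> (nat \<Rightarrow> 'a::real_normed_vector) \<Rightarrow> real" where
  "expected_norm \<phi> x = (\<integral>\<omega>. \<phi> (norm (x 1 + (\<Sum>i=2..n. r i \<omega> *\<^sub>R x i))) \<partial>M)"

text \<open>Conditions (3) and (4) assert this for some, respectively every, admissible \<open>\<phi>\<close>.\<close>
definition expected_gap :: "(real \<Rightarrow> real) \<Rightarrow> 'a::real_normed_vector itself \<Rightarrow> bool" where
  "expected_gap \<phi> _ \<longleftrightarrow> (\<exists>\<rho>>0. \<forall>x::nat \<Rightarrow> 'a. (\<forall>i\<in>{1..n}. norm (x i) = 1) \<longrightarrow>
     expected_norm \<phi> x \<ge> \<phi> 1 + \<rho>)"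

definition near_signs_prob :: "real \<Rightarrow> real" where
  "near_signs_prob \<delta> = (\<Prod>i\<in>{2..n}.
     min (prob (r i -` ball 1 \<delta> \<inter> space M)) (prob (r i -` ball (-1) \<delta> \<inter> space M)))"

lemma AE_abs_r_le_one: "AE \<omega> in M. \<forall>i\<in>{2..n}. \<bar>r i \<omega>\<bar> \<le> 1"
  using esssup_r by (intro AE_finite_allI) (auto intro: AE_abs_le_of_esssup)

lemma measurable_restrict_r: "(\<lambda>\<omega>. \<lambda>i\<in>{2..n}. r i \<omega>) \<in> M \<rightarrow>\<^sub>M (\<Pi>\<^sub>M i\<in>{2..n}. borel)"
  using measurable_r by (intro measurable_restrict) auto

lemma borel_measurable_norm_add_sum_r:
  fixes c :: "'a::real_normed_vector" and y :: "nat \<Rightarrow> 'a"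
  shows "(\<lambda>\<omega>. norm (c + (\<Sum>i=2..n. r i \<omega> *\<^sub>R y i))) \<in> borel_measurable M"
proof -
  have "(\<lambda>\<omega>. norm (c + (\<Sum>i\<in>{2..n}. (\<lambda>i\<in>{2..n}. r i \<omega>) i *\<^sub>R y i))) \<in> borel_measurable M"
    by (rule measurable_compose[OF measurable_restrict_r borel_measurable_norm_add_sum])
  also have "(\<lambda>\<omega>. norm (c + (\<Sum>i\<in>{2..n}. (\<lambda>i\<in>{2..n}. r i \<omega>) i *\<^sub>R y i))) =
      (\<lambda>\<omega>. norm (c + (\<Sum>i=2..n. r i \<omega> *\<^sub>R y i)))"
    by (intro ext arg_cong[where f = norm] arg_cong[where f = "\<lambda>v. c + v"] sum.cong) auto
  finally show ?thesis .
qed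

lemma integrable_phi_norm:
  fixes c :: "'a::real_normed_vector" and y :: "nat \<Rightarrow> 'a"
  assumes adm: "admissible_phi \<phi>"
  shows "integrable M (\<lambda>\<omega>. \<phi> (norm (c + (\<Sum>i=2..n. r i \<omega> *\<^sub>R y i))))"
proof (rule integrable_const_bound)
  show "(\<lambda>\<omega>. \<phi> (norm (c + (\<Sum>i=2..n. r i \<omega> *\<^sub>R y i)))) \<in> borel_measurable M"
    using measurable_compose[OF borel_measurable_norm_add_sum_r
        borel_measurable_admissible_phi_max[OF adm]] by simp
  show "AE \<omega> in M. norm (\<phi> (norm (c + (\<Sum>i=2..n. r i \<omega> *\<^sub>R y i))))
      \<le> \<phi> (norm c + (\<Sum>i=2..n. norm (y i)))"
    using AE_abs_r_le_one
  proof (rule AE_mp, intro AE_I2 impI)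
    fix \<omega> assume r: "\<forall>i\<in>{2..n}. \<bar>r i \<omega>\<bar> \<le> 1"
    have "norm (\<Sum>i=2..n. r i \<omega> *\<^sub>R y i) \<le> (\<Sum>i=2..n. norm (y i))"
      using r by (intro order_trans[OF norm_sum] sum_mono) (auto intro: mult_left_le_one_le)
    then have "norm (c + (\<Sum>i=2..n. r i \<omega> *\<^sub>R y i)) \<le> norm c + (\<Sum>i=2..n. norm (y i))"
      using norm_triangle_ineq[of c "\<Sum>i=2..n. r i \<omega> *\<^sub>R y i"] by linarith
    then have "\<phi> (norm (c + (\<Sum>i=2..n. r i \<omega> *\<^sub>R y i))) \<le> \<phi> (norm c + (\<Sum>i=2..n. norm (y i)))"
      by (intro admissible_phi_mono[OF adm]) simp_all
    moreover have "0 \<le> \<phi> (norm (c + (\<Sum>i=2..n. r i \<omega> *\<^sub>R y i)))"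
      by (intro admissible_phi_nonneg[OF adm]) simp
    ultimately show "norm (\<phi> (norm (c + (\<Sum>i=2..n. r i \<omega> *\<^sub>R y i)))) \<le> \<phi> (norm c + (\<Sum>i=2..n. norm (y i)))"
      by simp
  qed
qed

lemma expected_norm_reflect:
  fixes x :: "nat \<Rightarrow> 'a::real_normed_vector"
  assumes adm: "admissible_phi \<phi>"
  shows "(\<integral>\<omega>. \<phi> (norm (x 1 - (\<Sum>i=2..n. r i \<omega> *\<^sub>R x i))) \<partial>M) = expected_norm \<phi> x"
proof -
  define g where "g y = \<phi> (max (norm (x 1 + (\<Sum>i\<in>{2..n}. y i *\<^sub>R x i))) 0)" for y :: "nat \<Rightarrow> real"
  have g: "g \<in> borel_measurable (\<Pi>\<^sub>M i\<in>{2..n}. borel)"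
    unfolding g_def
    by (rule measurable_compose[OF borel_measurable_norm_add_sum borel_measurable_admissible_phi_max[OF adm]])
  have g_restrict: "g (\<lambda>i\<in>{2..n}. s * r i \<omega>) = \<phi> (norm (x 1 + s *\<^sub>R (\<Sum>i=2..n. r i \<omega> *\<^sub>R x i)))" for s \<omega>
  proof -
    have "(\<Sum>i\<in>{2..n}. (\<lambda>i\<in>{2..n}. s * r i \<omega>) i *\<^sub>R x i) = (\<Sum>i=2..n. (s * r i \<omega>) *\<^sub>R x i)"
      by (intro sum.cong) auto
    also have "\<dots> = s *\<^sub>R (\<Sum>i=2..n. r i \<omega> *\<^sub>R x i)"
      by (simp add: scaleR_sum_right)
    finally show ?thesis by (simp add: g_def)
  qed
  have "(\<integral>\<omega>. g (\<lambda>i\<in>{2..n}. r i \<omega>) \<partial>M) = (\<integral>\<omega>. g (\<lambda>i\<in>{2..n}. - r i \<omega>) \<partial>M)"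
    using two_le_n measurable_r symmetric_r
    by (intro integral_indep_symmetric_neg[OF _ _ indep_vars_subset[OF indep_r] _ g]) auto
  then show ?thesis
    using g_restrict[of 1] g_restrict[of "-1"] by (simp add: expected_norm_def)
qed

lemma near_signs_prob_pos: "\<delta> > 0 \<Longrightarrow> near_signs_prob \<delta> > 0"
  unfolding near_signs_prob_def
  using measurable_r symmetric_r esssup_r two_le_n
  by (intro prod_pos) (auto intro!: prob_ball_sign_pos)

lemma near_signs_prob_le:
  assumes "signs_on {2..n} \<eta>"
  shows "near_signs_prob \<delta> \<le> prob (\<Inter>i\<in>{2..n}. r i -` ball (\<eta> i) \<delta> \<inter> space M)"
proof -
  have "prob (\<Inter>i\<in>{2..n}. r i -` ball (\<eta> i) \<delta> \<inter> space M) =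
      (\<Prod>i\<in>{2..n}. prob (r i -` ball (\<eta> i) \<delta> \<inter> space M))"
    using two_le_n by (intro indep_varsD[OF indep_r]) auto
  moreover have "near_signs_prob \<delta> \<le> (\<Prod>i\<in>{2..n}. prob (r i -` ball (\<eta> i) \<delta> \<inter> space M))"
    unfolding near_signs_prob_def
  proof (rule prod_mono)
    fix i assume "i \<in> {2..n}"
    then have "\<eta> i = 1 \<or> \<eta> i = -1" using assms by (simp add: signs_on_def)
    then show "0 \<le> min (prob (r i -` ball 1 \<delta> \<inter> space M)) (prob (r i -` ball (-1) \<delta> \<inter> space M)) \<and>
      min (prob (r i -` ball 1 \<delta> \<inter> space M)) (prob (r i -` ball (-1) \<delta> \<inter> space M))
        \<le> prob (r i -` ball (\<eta> i) \<delta> \<inter> space M)"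
      by auto
  qed
  ultimately show ?thesis by simp
qed

lemma norm_random_sum_ge_near_signs:
  fixes x :: "nat \<Rightarrow> 'a::real_normed_vector"
  assumes unit: "\<forall>i\<in>{1..n}. norm (x i) = 1" and "\<rho> > 0"
    and long: "1 + \<rho> \<le> norm (x 1 + (\<Sum>i=2..n. \<eta> i *\<^sub>R x i))"
    and near: "\<omega> \<in> (\<Inter>i\<in>{2..n}. r i -` ball (\<eta> i) (\<rho> / (2 * n)) \<inter> space M)"
  shows "1 + \<rho> / 2 \<le> norm (x 1 + (\<Sum>i=2..n. r i \<omega> *\<^sub>R x i))"
proof -
  have "norm ((\<Sum>i=2..n. \<eta> i *\<^sub>R x i) - (\<Sum>i=2..n. r i \<omega> *\<^sub>R x i))
      \<le> (\<Sum>i=2..n. norm ((\<eta> i - r i \<omega>) *\<^sub>R x i))"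
    by (simp add: scaleR_diff_left sum_subtractf[symmetric] norm_sum)
  also have "\<dots> \<le> (\<Sum>i=2..n. \<rho> / (2 * n))"
  proof (rule sum_mono)
    fix i assume i: "i \<in> {2..n}"
    then have "\<bar>\<eta> i - r i \<omega>\<bar> < \<rho> / (2 * n)" using near by (auto simp: dist_real_def)
    then show "norm ((\<eta> i - r i \<omega>) *\<^sub>R x i) \<le> \<rho> / (2 * n)" using unit i by simp
  qed
  also have "\<dots> \<le> \<rho> / 2"
    using \<open>\<rho> > 0\<close> two_le_n by (simp add: field_simps)
  finally show ?thesis
    using long norm_triangle_ineq[of "x 1 + (\<Sum>i=2..n. r i \<omega> *\<^sub>R x i)"
        "(\<Sum>i=2..n. \<eta> i *\<^sub>R x i) - (\<Sum>i=2..n. r i \<omega> *\<^sub>R x i)"]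
    by simp
qed

text \<open>With probability at least \<open>near_signs_prob \<delta>\<close> the random signs are within \<open>\<delta>\<close> of \<open>\<eta>\<close>,
  and there the random vector \<open>x 1 + v\<close> is long. Averaging it with its reflection \<open>x 1 - v\<close>,
  which has the same law, gains the strict convexity of \<open>\<phi>\<close> on this event.\<close>
lemma expected_norm_lower:
  fixes x :: "nat \<Rightarrow> 'a::real_normed_vector"
  assumes adm: "admissible_phi \<phi>" and "\<rho> > 0"
    and unit: "\<forall>i\<in>{1..n}. norm (x i) = 1"
    and \<eta>: "signs_on {2..n} \<eta>" and long: "1 + \<rho> \<le> norm (x 1 + (\<Sum>i=2..n. \<eta> i *\<^sub>R x i))"
  shows "\<phi> 1 + convexity_gap \<phi> (min (\<rho> / 2) (1 / 2)) * near_signs_prob (\<rho> / (2 * n))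
    \<le> expected_norm \<phi> x"
proof -
  define c where "c = min (\<rho> / 2) (1 / 2)"
  define A where "A = (\<Inter>i\<in>{2..n}. r i -` ball (\<eta> i) (\<rho> / (2 * n)) \<inter> space M)"
  define v where "v \<omega> = (\<Sum>i=2..n. r i \<omega> *\<^sub>R x i)" for \<omega>
  have c: "0 < c" "c < 1" using \<open>\<rho> > 0\<close> by (auto simp: c_def)
  have A: "A \<in> sets M"
    unfolding A_def using two_le_n measurable_r by (intro sets.finite_INT) auto
  have pointwise: "\<phi> 1 + convexity_gap \<phi> c * indicator A \<omega>
      \<le> (\<phi> (norm (x 1 + v \<omega>)) + \<phi> (norm (x 1 - v \<omega>))) / 2" for \<omega>
  proof -
    have "2 = norm ((x 1 + v \<omega>) + (x 1 - v \<omega>))" using unit two_le_n by (simp flip: scaleR_2)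
    then have sum2: "2 \<le> norm (x 1 + v \<omega>) + norm (x 1 - v \<omega>)" by (metis norm_triangle_ineq)
    show ?thesis
    proof (cases "\<omega> \<in> A")
      case True
      then have "1 + c \<le> norm (x 1 + v \<omega>)"
        using norm_random_sum_ge_near_signs[OF unit \<open>\<rho> > 0\<close> long] by (force simp: A_def v_def c_def)
      then show ?thesis using True admissible_phi_gap_le_midpoint[OF adm c _ _ sum2] by simp
    next
      case False
      then show ?thesis using admissible_phi_one_le_midpoint[OF adm _ _ sum2] by simp
    qed
  qed
  have "integrable M (indicator A :: 'b \<Rightarrow> real)" using A by (simp add: emeasure_eq_measure)
  then have integral_indicator: "(\<integral>\<omega>. \<phi> 1 + convexity_gap \<phi> c * indicator A \<omega> \<partial>M)
      = \<phi> 1 + convexity_gap \<phi> c * prob A"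
    using A by (simp add: prob_space Bochner_Integration.integral_add emeasure_eq_measure)
  have "\<phi> 1 + convexity_gap \<phi> c * near_signs_prob (\<rho> / (2 * n)) \<le> \<phi> 1 + convexity_gap \<phi> c * prob A"
    using near_signs_prob_le[OF \<eta>] convexity_gap_pos[OF adm] c by (simp add: A_def)
  also have "\<dots> \<le> (\<integral>\<omega>. (\<phi> (norm (x 1 + v \<omega>)) + \<phi> (norm (x 1 - v \<omega>))) / 2 \<partial>M)"
    unfolding integral_indicator[symmetric]
    using pointwise A integrable_phi_norm[OF adm, of "x 1" x] integrable_phi_norm[OF adm, of "x 1" "\<lambda>i. - x i"]
    by (intro integral_mono) (auto simp: v_def sum_negf emeasure_eq_measure)
  also have "\<dots> = expected_norm \<phi> x"
    using expected_norm_reflect[OF adm, of x] integrable_phi_norm[OF adm, of "x 1" x]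
      integrable_phi_norm[OF adm, of "x 1" "\<lambda>i. - x i"]
    by (simp add: v_def expected_norm_def sum_negf)
  finally show ?thesis by (simp add: c_def)
qed

lemma expected_norm_upper:
  fixes x :: "nat \<Rightarrow> 'a::real_normed_vector"
  assumes adm: "admissible_phi \<phi>"
    and signs: "\<And>\<epsilon>. signs_on {2..n} \<epsilon> \<Longrightarrow> norm (x 1 + (\<Sum>i=2..n. \<epsilon> i *\<^sub>R x i)) \<le> B"
  shows "expected_norm \<phi> x \<le> \<phi> B"
proof -
  have "AE \<omega> in M. \<phi> (norm (x 1 + (\<Sum>i=2..n. r i \<omega> *\<^sub>R x i))) \<le> \<phi> B"
    using AE_abs_r_le_one
  proof (rule AE_mp, intro AE_I2 impI)
    fix \<omega> assume "\<forall>i\<in>{2..n}. \<bar>r i \<omega>\<bar> \<le> 1"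
    then have "norm (x 1 + (\<Sum>i=2..n. r i \<omega> *\<^sub>R x i)) \<le> B"
      by (intro norm_add_sum_le_of_signs_on[OF _ signs]) auto
    then show "\<phi> (norm (x 1 + (\<Sum>i=2..n. r i \<omega> *\<^sub>R x i))) \<le> \<phi> B"
      by (intro admissible_phi_mono[OF adm]) auto
  qed
  then have "expected_norm \<phi> x \<le> (\<integral>\<omega>. \<phi> B \<partial>M)"
    unfolding expected_norm_def using integrable_phi_norm[OF adm]
    by (intro integral_mono_AE) auto
  then show ?thesis by (simp add: prob_space)
qed

lemma expected_gap_if_uniformly_non_linf:
  assumes "uniformly_non_linf n TYPE('a::real_normed_vector)" and adm: "admissible_phi \<phi>"
  shows "expected_gap \<phi> TYPE('a)"
proof -
  obtain \<rho> where "\<rho> > 0" and long: "\<And>x::nat \<Rightarrow> 'a. \<forall>i\<in>{1..n}. norm (x i) = 1 \<Longrightarrow>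
      \<exists>\<epsilon>. signs_on {1..n} \<epsilon> \<and> norm (\<Sum>i=1..n. \<epsilon> i *\<^sub>R x i) \<ge> 1 + \<rho>"
    using assms(1) unfolding uniformly_non_linf_def by blast
  define \<rho>' where "\<rho>' = convexity_gap \<phi> (min (\<rho> / 2) (1 / 2)) * near_signs_prob (\<rho> / (2 * n))"
  have "\<rho>' > 0"
    unfolding \<rho>'_def using \<open>\<rho> > 0\<close> two_le_n
    by (intro mult_pos_pos convexity_gap_pos[OF adm] near_signs_prob_pos) auto
  moreover have "\<phi> 1 + \<rho>' \<le> expected_norm \<phi> x" if unit: "\<forall>i\<in>{1..n}. norm (x i) = 1" for x :: "nat \<Rightarrow> 'a"
  proof -
    obtain \<epsilon> where \<epsilon>: "signs_on {1..n} \<epsilon>" and "norm (\<Sum>i=1..n. \<epsilon> i *\<^sub>R x i) \<ge> 1 + \<rho>"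
      using long[OF unit] by blast
    moreover obtain \<eta> where "signs_on {2..n} \<eta>"
      and "norm (x 1 + (\<Sum>i=2..n. \<eta> i *\<^sub>R x i)) = norm (\<Sum>i=1..n. \<epsilon> i *\<^sub>R x i)"
      using signs_on_normalize_first[of n \<epsilon> x] two_le_n \<epsilon> by auto
    ultimately show ?thesis
      using expected_norm_lower[OF adm \<open>\<rho> > 0\<close> unit] unfolding \<rho>'_def by simp
  qed
  ultimately show ?thesis unfolding expected_gap_def by auto
qed

lemma uniformly_non_linf_if_expected_gap:
  assumes adm: "admissible_phi \<phi>" and "expected_gap \<phi> TYPE('a::real_normed_vector)"
  shows "uniformly_non_linf n TYPE('a)"
proof (rule ccontr)
  obtain \<rho> where "\<rho> > 0" and gap: "\<And>x::nat \<Rightarrow> 'a. \<forall>i\<in>{1..n}. norm (x i) = 1 \<Longrightarrow>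
      \<phi> 1 + \<rho> \<le> expected_norm \<phi> x"
    using assms(2) unfolding expected_gap_def by blast
  then obtain d where "d > 0" and d: "\<phi> (1 + d) < \<phi> 1 + \<rho>"
    using admissible_phi_right_continuous_at_one[OF adm] by blast
  assume "\<not> uniformly_non_linf n TYPE('a)"
  then obtain x :: "nat \<Rightarrow> 'a" where unit: "\<forall>i\<in>{1..n}. norm (x i) = 1"
    and short: "\<forall>\<epsilon>. signs_on {1..n} \<epsilon> \<longrightarrow> norm (\<Sum>i=1..n. \<epsilon> i *\<^sub>R x i) < 1 + d"
    using \<open>d > 0\<close> unfolding uniformly_non_linf_def not_le[symmetric] by blast
  have "norm (x 1 + (\<Sum>i=2..n. \<eta> i *\<^sub>R x i)) \<le> 1 + d" if "signs_on {2..n} \<eta>" for \<eta>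
  proof -
    have "n \<ge> 1" using two_le_n by simp
    with short signs_on_extend_first[OF _ that] show ?thesis
      by (metis less_imp_le)
  qed
  then have "expected_norm \<phi> x \<le> \<phi> (1 + d)" by (rule expected_norm_upper[OF adm])
  with gap[OF unit] d show False by simp
qed

end

theorem proposition2p2:
  fixes M :: "'b measure" and r :: "nat \<Rightarrow> 'b \<Rightarrow> real" and n :: nat
  assumes "prob_space M"
    and "\<And>i. i \<ge> 1 \<Longrightarrow> r i \<in> borel_measurable M"
    and "prob_space.indep_vars M (\<lambda>_. borel) r {1..}"
    and "\<And>i. i \<ge> 1 \<Longrightarrow> distr M borel (r i) = distr M borel (\<lambda>\<omega>. - r i \<omega>)"
    and "\<And>i. i \<ge> 1 \<Longrightarrow> esssup M (\<lambda>\<omega>. ereal \<bar>r i \<omega>\<bar>) = 1"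
    and "n \<ge> 2"
  shows
   "let
      P1 = \<not> linf_representable n TYPE('a::banach);
      P2 = (\<exists>\<rho>>0. \<forall>x :: nat \<Rightarrow> 'a. (\<forall>i\<in>{1..n}. norm (x i) = 1) \<longrightarrow>
              (\<exists>\<epsilon> :: nat \<Rightarrow> real. (\<forall>i\<in>{1..n}. \<epsilon> i = 1 \<or> \<epsilon> i = -1) \<and>
                  norm (\<Sum>i=1..n. \<epsilon> i *\<^sub>R x i) \<ge> 1 + \<rho>));
      E = (\<lambda>\<phi> (x :: nat \<Rightarrow> 'a). integral\<^sup>L M (\<lambda>\<omega>. \<phi> (norm (x 1 + (\<Sum>i=2..n. r i \<omega> *\<^sub>R x i)))));
      P3 = (\<exists>\<phi>. admissible_phi \<phi> \<and> (\<exists>\<rho>>0. \<forall>x :: nat \<Rightarrow> 'a. (\<forall>i\<in>{1..n}. norm (x i) = 1) \<longrightarrow>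
              E \<phi> x \<ge> \<phi> 1 + \<rho>));
      P4 = (\<forall>\<phi>. admissible_phi \<phi> \<longrightarrow> (\<exists>\<rho>>0. \<forall>x :: nat \<Rightarrow> 'a. (\<forall>i\<in>{1..n}. norm (x i) = 1) \<longrightarrow>
              E \<phi> x \<ge> \<phi> 1 + \<rho>))
    in (P1 \<longleftrightarrow> P2) \<and> (P2 \<longleftrightarrow> P3) \<and> (P3 \<longleftrightarrow> P4)"
proof -
  interpret symmetric_bounded_sequence M r n
    using assms unfolding symmetric_bounded_sequence_def symmetric_bounded_sequence_axioms_def by auto
  have "\<not> linf_representable n TYPE('a) \<longleftrightarrow> uniformly_non_linf n TYPE('a)"
    using assms(6) by (intro not_linf_representable_iff_uniformly_non_linf) simp
  moreover have "uniformly_non_linf n TYPE('a) \<Longrightarrow> admissible_phi \<phi> \<Longrightarrow> expected_gap \<phi> TYPE('a)" for \<phi>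
    by (rule expected_gap_if_uniformly_non_linf)
  moreover have "admissible_phi \<phi> \<Longrightarrow> expected_gap \<phi> TYPE('a) \<Longrightarrow> uniformly_non_linf n TYPE('a)" for \<phi>
    by (rule uniformly_non_linf_if_expected_gap)
  ultimately have "(\<not> linf_representable n TYPE('a) \<longleftrightarrow> uniformly_non_linf n TYPE('a)) \<and>
      (uniformly_non_linf n TYPE('a) \<longleftrightarrow> (\<exists>\<phi>. admissible_phi \<phi> \<and> expected_gap \<phi> TYPE('a))) \<and>
      ((\<exists>\<phi>. admissible_phi \<phi> \<and> expected_gap \<phi> TYPE('a)) \<longleftrightarrow>
       (\<forall>\<phi>. admissible_phi \<phi> \<longrightarrow> expected_gap \<phi> TYPE('a)))"
    using admissible_phi_power2 by blast
  then show ?thesis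
    unfolding Let_def uniformly_non_linf_def expected_gap_def expected_norm_def signs_on_def .
qed

end
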